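(* Let $S^\star\in\mathbb R^{d\times d}$ have at most $s$ nonzero entries in total and at most $\alpha d$ nonzero entries in every row and every column, let $\Delta^\star,\hat\Delta\in\mathbb R^{d\times d}$ be arbitrary, and let $R^\star=\Delta^\star-S^\star$. Let $\hat\alpha\ge\alpha$, let $\hat s\ge s$ be an integer, and let $S^0=\mathcal T_{\hat\alpha}\{\mathcal J_{\hat s}(\hat\Delta)\}$. Then $$\|S^0-S^\star\|_{\infty,\infty}\le3\|\hat\Delta-\Delta^\star\|_{\infty,\infty}+3\|R^\star\|_{\infty,\infty},\qquad \|S^0-S^\star\|_F\le(2\hat s)^{1/2}\|S^0-S^\star\|_{\infty,\infty}.$$
   Context: $\|A\|_{\infty,\infty}=\max_{i,j}|A_{ij}|$; $\|\cdot\|_F$ is the Frobenius norm. $\mathcal J_s(A)$ keeps the $s$ entries of $A$ largest in absolute value and sets the others to zero; $\mathcal T_\alpha(A)$ keeps $A_{ij}$ iff $|A_{ij}|$ is among the $\lfloor\alpha d\rfloor$ largest absolute values in row $i$ and also among the $\lfloor\alpha d\rfloor$ largest absolute values in column $j$, and sets the other entries to zero (ties broken arbitrarily). *)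

theory Defs
  imports "HOL-Analysis.Analysis"
begin

text \<open>d x d real matrices are rendered as real^'n^'n, with d = CARD('n).\<close>

definition maxnorm :: "real^'n^'n \<Rightarrow> real" where
  "maxnorm A = Max {\<bar>A $ i $ j\<bar> | i j. True}"

definition frob :: "real^'n^'n \<Rightarrow> real" where
  "frob A = sqrt (\<Sum>i\<in>UNIV. \<Sum>j\<in>UNIV. (A $ i $ j)^2)"

definition top_set :: "nat \<Rightarrow> ('a \<Rightarrow> real) \<Rightarrow> 'a set \<Rightarrow> 'a set \<Rightarrow> bool" where
  "top_set k f U K \<longleftrightarrow> K \<subseteq> U \<and> card K = min k (card U) \<and>
     (\<forall>x\<in>K. \<forall>y\<in>U - K. f y \<le> f x)"

text \<open>B is a (tie-breaking choice of) J_s(A).\<close>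
definition is_J :: "nat \<Rightarrow> real^'n^'n \<Rightarrow> real^'n^'n \<Rightarrow> bool" where
  "is_J s A B \<longleftrightarrow> (\<exists>K. top_set s (\<lambda>(i,j). \<bar>A $ i $ j\<bar>) UNIV K \<and>
     (\<forall>i j. B $ i $ j = (if (i,j) \<in> K then A $ i $ j else 0)))"

text \<open>B is a (tie-breaking choice of) T_alpha(A), keeping floor(alpha d) per row and column.\<close>
definition is_T :: "real \<Rightarrow> real^'n^'n \<Rightarrow> real^'n^'n \<Rightarrow> bool" where
  "is_T a A B \<longleftrightarrow> (let k = nat \<lfloor>a * real CARD('n)\<rfloor> in
     \<exists>Rw Cl. (\<forall>i. top_set k (\<lambda>j. \<bar>A $ i $ j\<bar>) UNIV (Rw i)) \<and>
             (\<forall>j. top_set k (\<lambda>i. \<bar>A $ i $ j\<bar>) UNIV (Cl j)) \<and>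
             (\<forall>i j. B $ i $ j = (if j \<in> Rw i \<and> i \<in> Cl j then A $ i $ j else 0)))"

end

theory Submission
  imports Defs
begin

text \<open>Hard thresholding can only drop an entry of \<open>S\<^sup>\<star>\<close>'s support in favour of an equally large
  entry outside that support, since the support fits into the kept budget (\<open>s \<le> \<hat>s\<close> entries in
  total, \<open>\<alpha> d \<le> \<hat>\<alpha> d\<close> per row and column). Off the support \<open>\<hat>\<Delta>\<close> is within
  \<open>\<delta> = \<parallel>\<hat>\<Delta> - \<Delta>\<^sup>\<star>\<parallel>\<^sub>\<infinity> + \<parallel>R\<^sup>\<star>\<parallel>\<^sub>\<infinity>\<close> of zero, so every entry of \<open>S\<^sup>0\<close> either equals
  \<open>\<hat>\<Delta>\<close> or is a zero replacing an entry of size at most \<open>\<delta>\<close>; either way it is within \<open>2\<delta>\<close> of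
  \<open>S\<^sup>\<star>\<close>. Finally \<open>S\<^sup>0 - S\<^sup>\<star>\<close> is supported on at most \<open>2\<hat>s\<close> entries.\<close>

definition entry_support :: "real^'n^'n \<Rightarrow> ('n \<times> 'n) set" where
  "entry_support A = {(i,j). A $ i $ j \<noteq> 0}"

lemma finite_abs_entries: "finite {\<bar>A $ i $ j\<bar> | i j. True}" for A :: "real^'n^'n"
proof -
  have "{\<bar>A $ i $ j\<bar> | i j. True} = (\<lambda>(i,j). \<bar>A $ i $ j\<bar>) ` UNIV" by auto
  then show ?thesis by simp
qed

lemma abs_entry_le_maxnorm: "\<bar>A $ i $ j\<bar> \<le> maxnorm A" for A :: "real^'n^'n"
  unfolding maxnorm_def by (rule Max_ge[OF finite_abs_entries]) blast

lemma maxnorm_le: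
  fixes A :: "real^'n^'n"
  assumes "\<And>i j. \<bar>A $ i $ j\<bar> \<le> c"
  shows "maxnorm A \<le> c"
  unfolding maxnorm_def using assms by (intro Max.boundedI[OF finite_abs_entries]) auto

lemma maxnorm_nonneg: "0 \<le> maxnorm A" for A :: "real^'n^'n"
  using abs_entry_le_maxnorm[of A undefined undefined] by linarith

lemma frob_le_sqrt_card_support_maxnorm:
  fixes A :: "real^'n^'n"
  shows "frob A \<le> sqrt (real (card (entry_support A))) * maxnorm A"
proof -
  let ?T = "entry_support A" and ?m = "maxnorm A"
  have "(\<Sum>i\<in>UNIV. \<Sum>j\<in>UNIV. (A $ i $ j)^2) = (\<Sum>(i,j)\<in>UNIV. (A $ i $ j)^2)"
    by (simp add: sum.cartesian_product UNIV_Times_UNIV[symmetric] del: UNIV_Times_UNIV)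
  also have "\<dots> = (\<Sum>(i,j)\<in>?T. (A $ i $ j)^2)"
    by (rule sum.mono_neutral_right) (auto simp: entry_support_def)
  also have "\<dots> \<le> (\<Sum>(i,j)\<in>?T. ?m^2)"
  proof (rule sum_mono)
    fix x :: "'n \<times> 'n"
    obtain i j where x: "x = (i,j)" by fastforce
    have "\<bar>A $ i $ j\<bar>^2 \<le> ?m^2"
      by (rule power_mono[OF abs_entry_le_maxnorm abs_ge_zero])
    then show "(case x of (i,j) \<Rightarrow> (A $ i $ j)^2) \<le> (case x of (i,j) \<Rightarrow> ?m^2)"
      by (simp add: x)
  qed
  also have "\<dots> = real (card ?T) * ?m^2" by simp
  finally have "frob A \<le> sqrt (real (card ?T) * ?m^2)"
    unfolding frob_def by (rule real_sqrt_le_mono)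
  also have "\<dots> = sqrt (real (card ?T)) * ?m"
    using maxnorm_nonneg[of A] by (simp add: real_sqrt_mult)
  finally show ?thesis .
qed

text \<open>If at most \<open>k\<close> elements of \<open>U\<close> lie outside the region where \<open>f \<le> c\<close>, then a
  \<open>k\<close>-top set leaves out only elements with \<open>f \<le> c\<close>: an excluded element of \<open>S\<close> is beaten by
  some kept element, which cannot lie in \<open>S\<close> as well because \<open>S\<close> has no room for both.\<close>
lemma top_set_excluded_le:
  assumes top: "top_set k f U K" and "finite U"
    and "S \<subseteq> U" "card S \<le> k" and small: "\<And>y. y \<in> U - S \<Longrightarrow> f y \<le> c"
    and x: "x \<in> U - K"
  shows "f x \<le> c"
proof (cases "x \<in> S")
  case True
  have KU: "K \<subseteq> U" and cK: "card K = min k (card U)"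
    and dom: "\<forall>a\<in>K. \<forall>b\<in>U - K. f b \<le> f a"
    using top unfolding top_set_def by auto
  have fS: "finite S" using \<open>S \<subseteq> U\<close> \<open>finite U\<close> by (rule finite_subset)
  have "\<not> K \<subseteq> S"
  proof
    assume "K \<subseteq> S"
    then have "card K \<le> card (S - {x})" using x fS by (intro card_mono) auto
    also have "\<dots> < card S" using fS True by (rule card_Diff1_less)
    finally show False using cK card_mono[OF \<open>finite U\<close> \<open>S \<subseteq> U\<close>] \<open>card S \<le> k\<close> by linarith
  qed
  then obtain y where "y \<in> K" "y \<notin> S" by blast
  then have "f x \<le> f y" and "f y \<le> c" using dom x small KU by auto
  then show ?thesis by linarith
qed (use small x in auto)

lemma is_J_entry_kept_or_small:
  fixes A B S :: "real^'n^'n"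
  assumes "is_J s A B" "card (entry_support S) \<le> s"
    and small: "\<And>i j. S $ i $ j = 0 \<Longrightarrow> \<bar>A $ i $ j\<bar> \<le> c"
  shows "B $ i $ j = A $ i $ j \<or> (B $ i $ j = 0 \<and> \<bar>A $ i $ j\<bar> \<le> c)"
proof -
  obtain K where top: "top_set s (\<lambda>(i,j). \<bar>A $ i $ j\<bar>) UNIV K"
    and B: "\<And>i j. B $ i $ j = (if (i,j) \<in> K then A $ i $ j else 0)"
    using assms(1) unfolding is_J_def by blast
  have "(\<lambda>(i,j). \<bar>A $ i $ j\<bar>) (i,j) \<le> c" if "(i,j) \<notin> K"
    using top_set_excluded_le[OF top _ _ assms(2)[unfolded entry_support_def]] that small
    by fastforce
  then show ?thesis by (simp add: B)
qed

lemma is_J_card_support: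
  fixes A B :: "real^'n^'n"
  assumes "is_J s A B"
  shows "card (entry_support B) \<le> s"
proof -
  obtain K where top: "top_set s (\<lambda>(i,j). \<bar>A $ i $ j\<bar>) UNIV K"
    and B: "\<And>i j. B $ i $ j = (if (i,j) \<in> K then A $ i $ j else 0)"
    using assms unfolding is_J_def by blast
  have "entry_support B \<subseteq> K" by (auto simp: entry_support_def B split: if_splits)
  then have "card (entry_support B) \<le> card K" by (intro card_mono) auto
  also have "\<dots> \<le> s" using top unfolding top_set_def by simp
  finally show ?thesis .
qed

lemma is_T_entry_kept_or_small:
  fixes A B S :: "real^'n^'n"
  assumes "is_T a A B"
    and rows: "\<And>i. real (card {j. S $ i $ j \<noteq> 0}) \<le> a * real CARD('n)"
    and cols: "\<And>j. real (card {i. S $ i $ j \<noteq> 0}) \<le> a * real CARD('n)"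
    and small: "\<And>i j. S $ i $ j = 0 \<Longrightarrow> \<bar>A $ i $ j\<bar> \<le> c"
  shows "B $ i $ j = A $ i $ j \<or> (B $ i $ j = 0 \<and> \<bar>A $ i $ j\<bar> \<le> c)"
proof -
  define k where "k = nat \<lfloor>a * real CARD('n)\<rfloor>"
  obtain Rw Cl where Rw: "top_set k (\<lambda>j. \<bar>A $ i $ j\<bar>) UNIV (Rw i)"
    and Cl: "top_set k (\<lambda>i. \<bar>A $ i $ j\<bar>) UNIV (Cl j)"
    and B: "B $ i $ j = (if j \<in> Rw i \<and> i \<in> Cl j then A $ i $ j else 0)"
    using assms(1) unfolding is_T_def Let_def k_def by blast
  have "\<bar>A $ i $ j\<bar> \<le> c" if "j \<notin> Rw i"
    using top_set_excluded_le[OF Rw finite subset_UNIV le_nat_floor[OF rows[of i], folded k_def]]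
      small[of i] that by auto
  moreover have "\<bar>A $ i $ j\<bar> \<le> c" if "i \<notin> Cl j"
    using top_set_excluded_le[OF Cl finite subset_UNIV le_nat_floor[OF cols[of j], folded k_def]]
      small[of _ j] that by auto
  ultimately show ?thesis using B by auto
qed

lemma is_T_support_subset:
  fixes A B :: "real^'n^'n"
  assumes "is_T a A B"
  shows "entry_support B \<subseteq> entry_support A"
proof -
  obtain Rw Cl where B: "\<And>i j. B $ i $ j = (if j \<in> Rw i \<and> i \<in> Cl j then A $ i $ j else 0)"
    using assms unfolding is_T_def Let_def by blast
  show ?thesis by (auto simp: entry_support_def B)
qed

lemma is_T_is_J_entry_kept_or_small:
  fixes A J B S :: "real^'n^'n"
  assumes "is_J s A J" "is_T a J B" "card (entry_support S) \<le> s"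
    and rows: "\<And>i. real (card {j. S $ i $ j \<noteq> 0}) \<le> a * real CARD('n)"
    and cols: "\<And>j. real (card {i. S $ i $ j \<noteq> 0}) \<le> a * real CARD('n)"
    and small: "\<And>i j. S $ i $ j = 0 \<Longrightarrow> \<bar>A $ i $ j\<bar> \<le> c"
  shows "B $ i $ j = A $ i $ j \<or> (B $ i $ j = 0 \<and> \<bar>A $ i $ j\<bar> \<le> c)"
proof -
  have J: "J $ i $ j = A $ i $ j \<or> (J $ i $ j = 0 \<and> \<bar>A $ i $ j\<bar> \<le> c)" for i j
    by (rule is_J_entry_kept_or_small[OF assms(1,3) small])
  have J_small: "S $ i $ j = 0 \<Longrightarrow> \<bar>J $ i $ j\<bar> \<le> c" for i j
    using J[of i j] small[of i j] by auto
  show ?thesis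
    using is_T_entry_kept_or_small[OF assms(2) rows cols J_small, of i j] J[of i j] by auto
qed

theorem mainTheorem7:
  fixes Sstar Dstar Dhat J S0 :: "real^'n^'n"
    and s shat :: nat and alpha ahat :: real
  assumes "card {(i,j). Sstar $ i $ j \<noteq> 0} \<le> s"
    and "\<forall>i. real (card {j. Sstar $ i $ j \<noteq> 0}) \<le> alpha * real CARD('n)"
    and "\<forall>j. real (card {i. Sstar $ i $ j \<noteq> 0}) \<le> alpha * real CARD('n)"
    and "ahat \<ge> alpha" and "shat \<ge> s"
    and "is_J shat Dhat J" and "is_T ahat J S0"
  shows "maxnorm (S0 - Sstar) \<le> 3 * maxnorm (Dhat - Dstar) + 3 * maxnorm (Dstar - Sstar)
       \<and> frob (S0 - Sstar) \<le> sqrt (2 * real shat) * maxnorm (S0 - Sstar)"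
proof -
  define \<delta> where "\<delta> = maxnorm (Dhat - Dstar) + maxnorm (Dstar - Sstar)"
  have close: "\<bar>Dhat $ i $ j - Sstar $ i $ j\<bar> \<le> \<delta>" for i j
    using abs_entry_le_maxnorm[of "Dhat - Dstar" i j] abs_entry_le_maxnorm[of "Dstar - Sstar" i j]
    unfolding \<delta>_def by simp
  have card_S: "card (entry_support Sstar) \<le> shat"
    using assms(1,5) unfolding entry_support_def by linarith
  have budget: "alpha * real CARD('n) \<le> ahat * real CARD('n)"
    using assms(4) by (simp add: mult_right_mono)
  have off_support: "Sstar $ i $ j = 0 \<Longrightarrow> \<bar>Dhat $ i $ j\<bar> \<le> \<delta>" for i j
    using close[of i j] by simp
  have rows: "real (card {j. Sstar $ i $ j \<noteq> 0}) \<le> ahat * real CARD('n)" for i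
    using assms(2) budget by (meson order_trans)
  have cols: "real (card {i. Sstar $ i $ j \<noteq> 0}) \<le> ahat * real CARD('n)" for j
    using assms(3) budget by (meson order_trans)
  have S0: "S0 $ i $ j = Dhat $ i $ j \<or> (S0 $ i $ j = 0 \<and> \<bar>Dhat $ i $ j\<bar> \<le> \<delta>)" for i j
    by (rule is_T_is_J_entry_kept_or_small[OF assms(6,7) card_S rows cols off_support])
  have entry: "\<bar>(S0 - Sstar) $ i $ j\<bar> \<le> 2 * \<delta>" for i j
    using S0[of i j] close[of i j] by auto
  have "entry_support (S0 - Sstar) \<subseteq> entry_support S0 \<union> entry_support Sstar"
    by (auto simp: entry_support_def)
  then have "entry_support (S0 - Sstar) \<subseteq> entry_support J \<union> entry_support Sstar"
    using is_T_support_subset[OF assms(7)] by blast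
  then have "card (entry_support (S0 - Sstar)) \<le> card (entry_support J) + card (entry_support Sstar)"
    by (meson card_Un_le card_mono finite le_trans)
  then have "real (card (entry_support (S0 - Sstar))) \<le> 2 * real shat"
    using is_J_card_support[OF assms(6)] card_S by linarith
  then have "frob (S0 - Sstar) \<le> sqrt (2 * real shat) * maxnorm (S0 - Sstar)"
    using frob_le_sqrt_card_support_maxnorm[of "S0 - Sstar"] maxnorm_nonneg[of "S0 - Sstar"]
    by (meson mult_right_mono order_trans real_sqrt_le_mono)
  moreover have "maxnorm (S0 - Sstar) \<le> 3 * maxnorm (Dhat - Dstar) + 3 * maxnorm (Dstar - Sstar)"
    using maxnorm_le[OF entry] maxnorm_nonneg[of "Dhat - Dstar"] maxnorm_nonneg[of "Dstar - Sstar"]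
    unfolding \<delta>_def by (simp add: algebra_simps)
  ultimately show ?thesis by blast
qed

end
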